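(* Let $\mathbf{H}$ be a CQH-Hermitian space whose anti-holomorphic cohomology groups $H^{(0,k)}$ are all finite-dimensional. Then the following are equivalent: (1) $\sigma_P\big(\Delta_{\overline{\partial}}:\Omega^{(0,\bullet)}\to\Omega^{(0,\bullet)}\big)\to\infty$; (2) $\sigma_P\big(\overline{\partial}\,\overline{\partial}^\dagger:\overline{\partial}\Omega^{(0,\bullet)}\to\overline{\partial}\Omega^{(0,\bullet)}\big)\to\infty$; (3) $\sigma_P\big(\overline{\partial}^\dagger\overline{\partial}:\overline{\partial}^\dagger\Omega^{(0,\bullet)}\to\overline{\partial}^\dagger\Omega^{(0,\bullet)}\big)\to\infty$.
   Context: CQH-Hermitian space. The following data are given: - $A$ and $H$ are compact matrix quantum group algebras (finitely generated cosemisimple Hopf $*$-algebras with faithful positive Haar state $h$), $A$ is a domain, $\pi:A\to H$ is a surjective Hopf $*$-map, and $B=A^{\mathrm{co}(H)}$. - $\Omega^\bullet$ is a left $A$-covariant differential $*$-calculus over $B$ of total degree $2n$, finite-dimensional in the category of covariant $B$-bimodules $F$ with $FB^+\subseteq B^+F$. - $\Omega^{(\bullet,\bullet)}$ is a covariant complex structure with $d=\partial+\overline{\partial}$. - $\sigma$ is a central, real, coinvariant $(1,1)$-form such that $L^{n-k}=(\sigma\wedge-)^{n-k}:\Omega^k\to\Omega^{2n-k}$ is bijective for $1\le k<n$. - The Hodge map is $*_\sigma(L^j\omega)=(-1)^{k(k+1)/2}i^{a-b}\frac{j!}{(n-j-k)!}L^{n-j-k}\omega$ for $\omega$ primitive of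 type $(a,b)$, $k=a+b$. - The metric $g_\sigma(\omega,\nu)=*_\sigma( *_\sigma(\omega^* )\wedge\nu)$ is positive definite, and $*_\sigma|_{\Omega^{2n}}:\Omega^{2n}\to B$ is an isomorphism with closed integral $h\circ*_\sigma$. - $\overline{\partial}^\dagger$ is the adjoint for $\langle\omega,\nu\rangle=h(g_\sigma(\omega,\nu))$, and $\Delta_{\overline{\partial}}=(\overline{\partial}+\overline{\partial}^\dagger)^2$. These operators are diagonalisable. - $H^{(0,k)}$ is the $k$-th cohomology of $(\Omega^{(0,\bullet)},\overline{\partial})$. - For a diagonalisable operator $T$, $\sigma_P(T)\to\infty$ means its eigenvalues, counted with multiplicity, tend to infinity. *)

theory Defs
  imports Complex_Main
begin

text \<open>Abstract (linear-algebraic) rendering of the anti-holomorphic part of a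
CQH-Hermitian space.  The total space of anti-holomorphic forms
Omega^(0,*) is the complex vector space 'v (scalar multiplication scl),
graded by the subspaces Om k = Omega^(0,k), k = 0..n.\<close>

definition fin_dim :: "(complex \<Rightarrow> 'v::ab_group_add \<Rightarrow> 'v) \<Rightarrow> 'v set \<Rightarrow> bool" where
  "fin_dim scl W \<longleftrightarrow> (\<exists>B. finite B \<and> W \<subseteq> module.span scl B)"

definition eigvecs :: "(complex \<Rightarrow> 'v::ab_group_add \<Rightarrow> 'v) \<Rightarrow> 'v set \<Rightarrow> ('v \<Rightarrow> 'v) \<Rightarrow> complex \<Rightarrow> 'v set" where
  "eigvecs scl W T lam = {v \<in> W. v \<noteq> 0 \<and> T v = scl lam v}"

definition diagonalisable_on :: "(complex \<Rightarrow> 'v::ab_group_add \<Rightarrow> 'v) \<Rightarrow> 'v set \<Rightarrow> ('v \<Rightarrow> 'v) \<Rightarrow> bool" where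
  "diagonalisable_on scl W T \<longleftrightarrow>
     T ` W \<subseteq> W \<and> W \<subseteq> module.span scl (\<Union>lam. eigvecs scl W T lam)"

text \<open>sigma_P(T : W -> W) tends to infinity: the eigenvalues counted with
multiplicity tend to infinity, i.e. for every bound C the eigenvectors with
eigenvalue of modulus at most C span a finite-dimensional space.\<close>
definition spec_to_infinity :: "(complex \<Rightarrow> 'v::ab_group_add \<Rightarrow> 'v) \<Rightarrow> 'v set \<Rightarrow> ('v \<Rightarrow> 'v) \<Rightarrow> bool" where
  "spec_to_infinity scl W T \<longleftrightarrow>
     (\<forall>C::real. fin_dim scl (module.span scl (\<Union>lam \<in> {lam. cmod lam \<le> C}. eigvecs scl W T lam)))"

text \<open>Anti-holomorphic Hodge-de Rham data of a CQH-Hermitian space: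
 graded complex vector space, positive definite Hermitian inner product
 (conjugate-linear in the first slot) for which the degrees are orthogonal,
 the differential dbar (degree +1, dbar o dbar = 0) and its adjoint dadj.\<close>
definition dbar_hermitian_complex ::
  "(complex \<Rightarrow> 'v::ab_group_add \<Rightarrow> 'v) \<Rightarrow> ('v \<Rightarrow> 'v \<Rightarrow> complex) \<Rightarrow> nat \<Rightarrow> (nat \<Rightarrow> 'v set)
   \<Rightarrow> ('v \<Rightarrow> 'v) \<Rightarrow> ('v \<Rightarrow> 'v) \<Rightarrow> bool" where
  "dbar_hermitian_complex scl ip n Om dbar dadj \<longleftrightarrow>
     Vector_Spaces.vector_space scl \<and>
     (\<forall>x y z. ip x (y + z) = ip x y + ip x z) \<and>
     (\<forall>x y c. ip x (scl c y) = c * ip x y) \<and>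
     (\<forall>x y. ip y x = cnj (ip x y)) \<and>
     (\<forall>x. x \<noteq> 0 \<longrightarrow> (\<exists>r::real. r > 0 \<and> ip x x = complex_of_real r)) \<and>
     (\<forall>k. module.subspace scl (Om k)) \<and>
     (\<forall>k. n < k \<longrightarrow> Om k = {0}) \<and>
     UNIV = module.span scl (\<Union>k \<in> {..n}. Om k) \<and>
     (\<forall>f. (\<forall>k. f k \<in> Om k) \<longrightarrow> (\<Sum>k\<le>n. f k) = 0 \<longrightarrow> (\<forall>k\<le>n. f k = 0)) \<and>
     (\<forall>j k x y. j \<noteq> k \<longrightarrow> x \<in> Om j \<longrightarrow> y \<in> Om k \<longrightarrow> ip x y = 0) \<and>
     Vector_Spaces.linear scl scl dbar \<and>
     (\<forall>k. dbar ` Om k \<subseteq> Om (Suc k)) \<and>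
     (\<forall>x. dbar (dbar x) = 0) \<and>
     Vector_Spaces.linear scl scl dadj \<and>
     (\<forall>x y. ip (dbar x) y = ip x (dadj y))"

definition dbar_laplacian :: "('v::ab_group_add \<Rightarrow> 'v) \<Rightarrow> ('v \<Rightarrow> 'v) \<Rightarrow> 'v \<Rightarrow> 'v" where
  "dbar_laplacian dbar dadj x = (dbar (dbar x + dadj x) + dadj (dbar x + dadj x))"

text \<open>H^(0,k) = ker(dbar on Om k) / dbar(Om (k-1)) (with Om(-1) = 0) is
finite-dimensional: the cocycles lie in the span of finitely many vectors
together with the coboundaries.\<close>
definition cohom_fin_dim ::
  "(complex \<Rightarrow> 'v::ab_group_add \<Rightarrow> 'v) \<Rightarrow> (nat \<Rightarrow> 'v set) \<Rightarrow> ('v \<Rightarrow> 'v) \<Rightarrow> nat \<Rightarrow> bool" where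
  "cohom_fin_dim scl Om dbar k \<longleftrightarrow>
     (\<exists>B. finite B \<and>
        {v \<in> Om k. dbar v = 0} \<subseteq>
          module.span scl (B \<union> {dbar w | w j. k = Suc j \<and> w \<in> Om j}))"

end

theory Submission
  imports Defs
begin

(* Write P for the differential and Q for its adjoint. Since P P = 0 = Q Q, the Laplacian is
   P Q + Q P, and P, Q exchange the eigenvectors of Q P on im Q and of P Q on im P with the same
   eigenvalue, which is never 0 by positivity of the inner product; this gives (2) <-> (3).
   Eigenvectors of P Q on im P are eigenvectors of the Laplacian, so (1) -> (2). Conversely, an
   eigenvector v of the Laplacian with eigenvalue lam <> 0 is (P Q v + Q P v) / lam, a sum of
   eigenvectors of P Q and Q P with the same eigenvalue, while the kernel of the Laplacian consists
   of the harmonic vectors. Diagonalisability of the Laplacian gives the Hodge decomposition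
   V = H + im P + im Q with H orthogonal to im P + im Q, so H embeds into the cohomology and is
   finite-dimensional. *)

locale complex_vector_space = vector_space scale
  for scale :: "complex \<Rightarrow> 'v::ab_group_add \<Rightarrow> 'v" (infixr \<open>*s\<close> 75)
begin

lemma fin_dim_span_iff: "fin_dim scale (span X) \<longleftrightarrow> (\<exists>B. finite B \<and> X \<subseteq> span B)"
  unfolding fin_dim_def by (meson span_minimal span_superset subspace_span subset_trans)

lemma spec_to_infinity_iff:
  "spec_to_infinity scale W T \<longleftrightarrow>
     (\<forall>C. \<exists>B. finite B \<and> (\<Union>lam \<in> {lam. cmod lam \<le> C}. eigvecs scale W T lam) \<subseteq> span B)"
  unfolding spec_to_infinity_def fin_dim_span_iff ..

lemma spec_to_infinity_mono:
  assumes "\<And>lam. eigvecs scale W T lam \<subseteq> eigvecs scale W' T' lam"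
    and "spec_to_infinity scale W' T'"
  shows "spec_to_infinity scale W T"
proof -
  have "(\<Union>lam \<in> L. eigvecs scale W T lam) \<subseteq> (\<Union>lam \<in> L. eigvecs scale W' T' lam)" for L
    using assms(1) by blast
  then show ?thesis using assms(2) unfolding spec_to_infinity_iff by (meson order_trans)
qed

lemma graded_decomposition:
  fixes Om :: "nat \<Rightarrow> 'v set"
  assumes Om: "\<And>k. subspace (Om k)" and spanning: "UNIV = span (\<Union>k \<in> {..n}. Om k)"
  shows "\<exists>f. (\<forall>k. f k \<in> Om k) \<and> v = (\<Sum>k\<le>n. f k)"
proof -
  define S where "S = {v. \<exists>f. (\<forall>k. f k \<in> Om k) \<and> v = (\<Sum>k\<le>n. f k)}"
  have "subspace S"
  proof (rule subspaceI)
    show "0 \<in> S" unfolding S_def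
      by (rule CollectI, rule exI[of _ "\<lambda>_. 0"]) (simp add: subspace_0[OF Om])
  next
    fix x y assume "x \<in> S" "y \<in> S"
    then obtain f g where "\<forall>k. f k \<in> Om k" "x = (\<Sum>k\<le>n. f k)" "\<forall>k. g k \<in> Om k" "y = (\<Sum>k\<le>n. g k)"
      unfolding S_def by blast
    then show "x + y \<in> S" unfolding S_def
      by (intro CollectI exI[of _ "\<lambda>k. f k + g k"]) (simp add: sum.distrib subspace_add[OF Om])
  next
    fix c x assume "x \<in> S"
    then obtain f where "\<forall>k. f k \<in> Om k" "x = (\<Sum>k\<le>n. f k)"
      unfolding S_def by blast
    then show "c *s x \<in> S" unfolding S_def
      by (intro CollectI exI[of _ "\<lambda>k. c *s f k"]) (simp add: scale_sum_right subspace_scale[OF Om])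
  qed
  moreover have "(\<Union>k \<in> {..n}. Om k) \<subseteq> S"
  proof clarsimp
    fix j x assume "j \<le> n" "x \<in> Om j"
    then show "x \<in> S" unfolding S_def
      by (intro CollectI exI[of _ "\<lambda>k. if k = j then x else 0"]) (simp add: subspace_0[OF Om])
  qed
  ultimately have "span (\<Union>k \<in> {..n}. Om k) \<subseteq> S" by (rule span_minimal[rotated])
  then have "v \<in> S" using spanning by auto
  then show ?thesis unfolding S_def by blast
qed

context
  fixes d :: "'v \<Rightarrow> 'v" and Om :: "nat \<Rightarrow> 'v set" and n :: nat
  assumes d: "Vector_Spaces.linear scale scale d"
    and d_Om: "\<And>k. d ` Om k \<subseteq> Om (Suc k)"
    and Om: "\<And>k. subspace (Om k)"
    and Om_top: "Om (Suc n) = {0}"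
    and direct: "\<And>f. (\<And>k. f k \<in> Om k) \<Longrightarrow> (\<Sum>k\<le>n. f k) = 0 \<Longrightarrow> (\<forall>k\<le>n. f k = 0)"
begin

interpretation d: Vector_Spaces.linear scale scale d by (rule d)

(* d v is the sum of the components d (f k), of pairwise distinct degrees Suc k. *)
lemma cocycle_components:
  assumes f: "\<And>k. f k \<in> Om k" and cocycle: "d (\<Sum>k\<le>n. f k) = 0" and "k \<le> n"
  shows "d (f k) = 0"
proof -
  define g where "g k = (if k = 0 then 0 else d (f (k - 1)))" for k
  have g: "g k \<in> Om k" for k
    using subspace_0[OF Om] d_Om f by (cases k) (auto simp: g_def image_subset_iff)
  have top: "d (f n) = 0" using d_Om[of n] f[of n] Om_top by auto
  have "(\<Sum>k\<le>Suc n. g k) = d (\<Sum>k\<le>n. f k)"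
    by (subst sum.atMost_Suc_shift) (simp add: g_def d.sum)
  then have "(\<Sum>k\<le>n. g k) = 0" using cocycle top by (simp add: g_def)
  then have "g (Suc k) = 0" if "k < n" for k using direct[OF g] that by simp
  with top \<open>k \<le> n\<close> show ?thesis by (cases "k = n") (auto simp: g_def)
qed

lemma finite_total_cohomology:
  assumes spanning: "UNIV = span (\<Union>k \<in> {..n}. Om k)"
    and cohom: "\<And>k. cohom_fin_dim scale Om d k"
  shows "\<exists>B. finite B \<and> {v. d v = 0} \<subseteq> span (B \<union> range d)"
proof -
  have "\<exists>Bk. \<forall>k. finite (Bk k) \<and>
      {v \<in> Om k. d v = 0} \<subseteq> span (Bk k \<union> {d w | w j. k = Suc j \<and> w \<in> Om j})"
    using cohom unfolding cohom_fin_dim_def by (intro choice) blast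
  then obtain Bk where Bk: "\<And>k. finite (Bk k)"
    "\<And>k. {v \<in> Om k. d v = 0} \<subseteq> span (Bk k \<union> {d w | w j. k = Suc j \<and> w \<in> Om j})"
    by blast
  define B where "B = (\<Union>k\<le>n. Bk k)"
  have "v \<in> span (B \<union> range d)" if "d v = 0" for v
  proof -
    obtain f where f: "\<And>k. f k \<in> Om k" "v = (\<Sum>k\<le>n. f k)"
      using graded_decomposition[OF Om spanning] by blast
    have "f k \<in> span (B \<union> range d)" if "k \<le> n" for k
    proof -
      have "f k \<in> {v \<in> Om k. d v = 0}"
        using f cocycle_components[of f k] \<open>d v = 0\<close> that by simp
      then have "f k \<in> span (Bk k \<union> {d w | w j. k = Suc j \<and> w \<in> Om j})"
        using Bk(2) by blast
      moreover have "Bk k \<union> {d w | w j. k = Suc j \<and> w \<in> Om j} \<subseteq> B \<union> range d"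
        using that unfolding B_def by blast
      ultimately show ?thesis using span_mono by blast
    qed
    then show ?thesis unfolding f(2) by (intro span_sum) auto
  qed
  moreover have "finite B" unfolding B_def using Bk(1) by simp
  ultimately show ?thesis by blast
qed

end

end

locale hermitian_space = complex_vector_space scale
  for scale :: "complex \<Rightarrow> 'v::ab_group_add \<Rightarrow> 'v" (infixr \<open>*s\<close> 75) +
  fixes ip :: "'v \<Rightarrow> 'v \<Rightarrow> complex"
  assumes ip_add_right: "ip x (y + z) = ip x y + ip x z"
    and ip_scale_right: "ip x (c *s y) = c * ip x y"
    and ip_commute: "ip y x = cnj (ip x y)"
    and ip_self_pos: "x \<noteq> 0 \<Longrightarrow> \<exists>r::real. r > 0 \<and> ip x x = complex_of_real r"
begin

lemma ip_zero_right [simp]: "ip x 0 = 0"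
  using ip_scale_right[of x 0 0] by simp

lemma ip_zero_left [simp]: "ip 0 y = 0"
  using ip_commute[of 0 y] by simp

lemma ip_self_nonneg: "\<exists>r::real. r \<ge> 0 \<and> ip x x = complex_of_real r"
  using ip_self_pos[of x] by (cases "x = 0") force+

lemma ip_self_eq_0_iff [simp]: "ip x x = 0 \<longleftrightarrow> x = 0"
  using ip_self_pos[of x] by force

lemma ip_self_add_eq_0_iff: "ip x x + ip y y = 0 \<longleftrightarrow> x = 0 \<and> y = 0"
proof -
  obtain r s where "r \<ge> 0" "ip x x = complex_of_real r" "s \<ge> 0" "ip y y = complex_of_real s"
    using ip_self_nonneg by metis
  then show ?thesis by (metis add_nonneg_eq_0_iff ip_self_eq_0_iff of_real_add of_real_eq_0_iff)
qed

end

locale adjoint_pair = hermitian_space +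
  fixes P Q
  assumes linear_P: "Vector_Spaces.linear scale scale P"
    and linear_Q: "Vector_Spaces.linear scale scale Q"
    and adjoint: "ip (P x) y = ip x (Q y)"

sublocale adjoint_pair \<subseteq> P: Vector_Spaces.linear scale scale P by (rule linear_P)
sublocale adjoint_pair \<subseteq> Q: Vector_Spaces.linear scale scale Q by (rule linear_Q)

context adjoint_pair
begin

lemma adjoint_swap: "ip (Q x) y = ip x (P y)"
  by (metis adjoint ip_commute)

lemma adjoint_pair_swap: "adjoint_pair scale ip Q P"
  by unfold_locales (fact adjoint_swap)

lemma eigvecs_swap:
  assumes "u \<in> eigvecs scale (range Q) (Q \<circ> P) lam"
  shows "lam \<noteq> 0" and "P u \<in> eigvecs scale (range P) (P \<circ> Q) lam"
proof -
  from assms obtain w where u: "u = Q w" "u \<noteq> 0" "Q (P u) = lam *s u"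
    unfolding eigvecs_def by auto
  show "lam \<noteq> 0"
  proof
    assume "lam = 0"
    then have "ip (P u) (P u) = 0" using u(3) adjoint[of u "P u"] by simp
    then have "ip u u = 0" using u(1) adjoint_swap[of w u] by simp
    then show False using u(2) by simp
  qed
  then show "P u \<in> eigvecs scale (range P) (P \<circ> Q) lam"
    using u(2,3) unfolding eigvecs_def by (auto simp: P.scale)
qed

lemma spec_to_infinity_swap:
  assumes "spec_to_infinity scale (range P) (P \<circ> Q)"
  shows "spec_to_infinity scale (range Q) (Q \<circ> P)"
  unfolding spec_to_infinity_iff
proof
  fix C
  from assms obtain B where "finite B"
    and B: "(\<Union>lam \<in> {lam. cmod lam \<le> C}. eigvecs scale (range P) (P \<circ> Q) lam) \<subseteq> span B"
    unfolding spec_to_infinity_iff by blast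
  have "u \<in> span (Q ` B)"
    if "cmod lam \<le> C" and u: "u \<in> eigvecs scale (range Q) (Q \<circ> P) lam" for u lam
  proof -
    have "Q (P u) \<in> span (Q ` B)"
      using B eigvecs_swap(2)[OF u] that(1) by (auto simp: Q.span_image)
    moreover have "u = (1 / lam) *s Q (P u)"
      using u eigvecs_swap(1)[OF u] unfolding eigvecs_def by simp
    ultimately show ?thesis by (metis span_scale)
  qed
  with \<open>finite B\<close> show "\<exists>B. finite B \<and>
      (\<Union>lam \<in> {lam. cmod lam \<le> C}. eigvecs scale (range Q) (Q \<circ> P) lam) \<subseteq> span B"
    by blast
qed

lemma harmonic_if_laplacian_eq_0:
  assumes "P (Q v) + Q (P v) = 0"
  shows "P v = 0" and "Q v = 0"
proof -
  have "ip (Q v) (Q v) + ip (P v) (P v) = ip v (P (Q v) + Q (P v))"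
    using adjoint[of v "P v"] adjoint_swap[of v "Q v"]
    by (simp add: ip_add_right)
  then show "P v = 0" "Q v = 0" using assms ip_self_add_eq_0_iff by simp_all
qed

lemma harmonic_orthogonal:
  assumes "P h = 0" "Q h = 0" "h = P a + Q b"
  shows "h = 0"
proof -
  have "ip h h = ip (Q h) a + ip (P h) b"
    using assms(3) adjoint[of h b] adjoint_swap[of h a]
    by (metis ip_add_right)
  then show ?thesis using assms(1,2) by simp
qed

end

locale hermitian_differential = adjoint_pair +
  assumes P_P [simp]: "P (P x) = 0"
begin

lemma Q_Q [simp]: "Q (Q x) = 0"
proof -
  have "ip (Q (Q x)) (Q (Q x)) = ip x (P (P (Q (Q x))))"
    using adjoint_swap[of "Q x" "Q (Q x)"] adjoint_swap[of x "P (Q (Q x))"] by simp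
  then show ?thesis by simp
qed

lemma laplacian_eq: "dbar_laplacian P Q v = P (Q v) + Q (P v)"
  unfolding dbar_laplacian_def by (simp add: P.add Q.add)

lemma hodge_decomposition:
  assumes diag: "diagonalisable_on scale UNIV (dbar_laplacian P Q)"
  shows "\<exists>h a b. P h = 0 \<and> Q h = 0 \<and> x = h + (P a + Q b)"
proof -
  let ?S = "{h + r | h r. h \<in> {h. P h = 0} \<inter> {h. Q h = 0} \<and>
                         r \<in> {y + z | y z. y \<in> range P \<and> z \<in> range Q}}"
  have "subspace ?S"
    by (intro subspace_sums subspace_inter P.subspace_kernel Q.subspace_kernel
        P.subspace_image Q.subspace_image subspace_UNIV)
  moreover have "eigvecs scale UNIV (dbar_laplacian P Q) lam \<subseteq> ?S" for lam
  proof
    fix v assume "v \<in> eigvecs scale UNIV (dbar_laplacian P Q) lam"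
    then have v: "P (Q v) + Q (P v) = lam *s v" unfolding eigvecs_def by (simp add: laplacian_eq)
    show "v \<in> ?S"
    proof (cases "lam = 0")
      case True
      then have "P v = 0 \<and> Q v = 0" using harmonic_if_laplacian_eq_0 v by simp
      moreover have "v = v + (P 0 + Q 0)" by simp
      ultimately show ?thesis by blast
    next
      case False
      then have "v = 0 + (P ((1 / lam) *s Q v) + Q ((1 / lam) *s P v))"
        using v by (simp add: P.scale Q.scale flip: scale_right_distrib)
      then show ?thesis using P.zero Q.zero by blast
    qed
  qed
  ultimately have "span (\<Union>lam. eigvecs scale UNIV (dbar_laplacian P Q) lam) \<subseteq> ?S"
    by (intro span_minimal) blast+
  then have "x \<in> ?S" using diag unfolding diagonalisable_on_def by blast
  then show ?thesis by blast
qed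

lemma fin_dim_harmonic:
  assumes diag: "diagonalisable_on scale UNIV (dbar_laplacian P Q)"
    and "finite B" and cocycles: "{v. P v = 0} \<subseteq> span (B \<union> range P)"
  shows "fin_dim scale {h. P h = 0 \<and> Q h = 0}"
proof -
  let ?H = "{h. P h = 0 \<and> Q h = 0}"
  let ?R = "{y + z | y z. y \<in> range P \<and> z \<in> range Q}"
  have H: "subspace ?H"
    using subspace_inter[OF P.subspace_kernel Q.subspace_kernel] by (simp add: Collect_conj_eq)
  have R: "subspace ?R"
    by (intro subspace_sums P.subspace_image Q.subspace_image subspace_UNIV)
  have "\<forall>x. \<exists>h. h \<in> ?H \<and> x - h \<in> ?R"
  proof
    fix x
    obtain h a b where "P h = 0" "Q h = 0" "x = h + (P a + Q b)"
      using hodge_decomposition[OF diag] by blast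
    then have "h \<in> ?H" and "x - h = P a + Q b" by simp_all
    then show "\<exists>h. h \<in> ?H \<and> x - h \<in> ?R" by blast
  qed
  then obtain hp where "\<forall>x. hp x \<in> ?H \<and> x - hp x \<in> ?R" by (rule choice[THEN exE])
  then have hp: "\<And>x. hp x \<in> ?H" "\<And>x. x - hp x \<in> ?R" by blast+
  have "B \<union> range P \<subseteq> span (hp ` B \<union> ?R)"
  proof
    fix x assume "x \<in> B \<union> range P"
    then show "x \<in> span (hp ` B \<union> ?R)"
    proof
      assume "x \<in> B"
      then have "hp x \<in> span (hp ` B \<union> ?R)" "x - hp x \<in> span (hp ` B \<union> ?R)"
        using hp(2)[of x] by (simp_all add: span_base)
      then have "hp x + (x - hp x) \<in> span (hp ` B \<union> ?R)" by (rule span_add)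
      then show ?thesis by simp
    next
      assume "x \<in> range P"
      then obtain a where "x = P a + Q 0" by auto
      then have "x \<in> ?R" by blast
      then show ?thesis by (simp add: span_base)
    qed
  qed
  then have span_BP: "span (B \<union> range P) \<subseteq> span (hp ` B \<union> ?R)"
    by (rule span_minimal) simp
  have span_hp: "span (hp ` B) \<subseteq> ?H"
    using hp(1) H by (intro span_minimal) auto
  have "h \<in> span (hp ` B)" if h: "h \<in> ?H" for h
  proof -
    have "h \<in> span (hp ` B \<union> ?R)" using h cocycles span_BP by blast
    then obtain a r where hr: "h = a + r" "a \<in> span (hp ` B)" "r \<in> span ?R"
      unfolding span_Un by blast
    have "span ?R = ?R" using R by (rule span_eq_iff[THEN iffD2])
    with hr(3) have "r \<in> ?R" by (simp only:)
    then obtain y z where r: "r = P y + Q z" by blast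
    have "r = h - a" using hr(1) by simp
    then have "r \<in> ?H" using subspace_diff[OF H h] hr(2) span_hp by auto
    then have "r = 0" using r harmonic_orthogonal by blast
    with hr show ?thesis by simp
  qed
  then show ?thesis unfolding fin_dim_def using \<open>finite B\<close> by blast
qed

lemma spec_to_infinity_PQ_if_laplacian:
  "spec_to_infinity scale UNIV (dbar_laplacian P Q) \<Longrightarrow> spec_to_infinity scale (range P) (P \<circ> Q)"
  by (erule spec_to_infinity_mono[rotated]) (auto simp: eigvecs_def laplacian_eq)

lemma spec_to_infinity_laplacian:
  assumes harmonic: "fin_dim scale {h. P h = 0 \<and> Q h = 0}"
    and PQ: "spec_to_infinity scale (range P) (P \<circ> Q)"
    and QP: "spec_to_infinity scale (range Q) (Q \<circ> P)"
  shows "spec_to_infinity scale UNIV (dbar_laplacian P Q)"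
  unfolding spec_to_infinity_iff
proof
  fix C
  have small_eigen_in_span: "x \<in> span B"
    if "(\<Union>lam \<in> {lam. cmod lam \<le> C}. eigvecs scale W T lam) \<subseteq> span B"
      and "x \<in> W" "T x = lam *s x" "cmod lam \<le> C" for x B W T lam
    using that span_zero unfolding eigvecs_def by (cases "x = 0") auto
  obtain B0 where "finite B0" and B0: "{h. P h = 0 \<and> Q h = 0} \<subseteq> span B0"
    using harmonic unfolding fin_dim_def by blast
  obtain B1 where "finite B1"
    and B1: "(\<Union>lam \<in> {lam. cmod lam \<le> C}. eigvecs scale (range P) (P \<circ> Q) lam) \<subseteq> span B1"
    using PQ unfolding spec_to_infinity_iff by blast
  obtain B2 where "finite B2"
    and B2: "(\<Union>lam \<in> {lam. cmod lam \<le> C}. eigvecs scale (range Q) (Q \<circ> P) lam) \<subseteq> span B2"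
    using QP unfolding spec_to_infinity_iff by blast
  define B where "B = B0 \<union> B1 \<union> B2"
  have "span B0 \<subseteq> span B" "span B1 \<subseteq> span B" "span B2 \<subseteq> span B"
    unfolding B_def by (intro span_mono; blast)+
  have "v \<in> span B"
    if "cmod lam \<le> C" and "v \<in> eigvecs scale UNIV (dbar_laplacian P Q) lam" for v lam
  proof -
    have v: "P (Q v) + Q (P v) = lam *s v"
      using that(2) unfolding eigvecs_def by (simp add: laplacian_eq)
    show ?thesis
    proof (cases "lam = 0")
      case True
      then have "v \<in> span B0" using v B0 harmonic_if_laplacian_eq_0 by auto
      then show ?thesis using \<open>span B0 \<subseteq> span B\<close> by blast
    next
      case False
      have eig: "(P \<circ> Q) (P (Q v)) = lam *s P (Q v)" "(Q \<circ> P) (Q (P v)) = lam *s Q (P v)"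
        using arg_cong[OF v, of "P \<circ> Q"] arg_cong[OF v, of "Q \<circ> P"]
        by (simp_all add: P.add Q.add P.scale Q.scale)
      have "P (Q v) \<in> span B1" and "Q (P v) \<in> span B2"
        using small_eigen_in_span[OF B1 rangeI eig(1) \<open>cmod lam \<le> C\<close>]
          small_eigen_in_span[OF B2 rangeI eig(2) \<open>cmod lam \<le> C\<close>] .
      then have "P (Q v) + Q (P v) \<in> span B"
        using \<open>span B1 \<subseteq> span B\<close> \<open>span B2 \<subseteq> span B\<close> span_add by blast
      then have "(1 / lam) *s (P (Q v) + Q (P v)) \<in> span B" by (rule span_scale)
      then show ?thesis using v False by simp
    qed
  qed
  moreover have "finite B" unfolding B_def using \<open>finite B0\<close> \<open>finite B1\<close> \<open>finite B2\<close> by simp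
  ultimately show "\<exists>B. finite B \<and>
      (\<Union>lam \<in> {lam. cmod lam \<le> C}. eigvecs scale UNIV (dbar_laplacian P Q) lam) \<subseteq> span B"
    by blast
qed

end

lemma hermitian_differential_if_dbar_hermitian_complex:
  assumes "dbar_hermitian_complex scl ip n Om dbar dadj"
  shows "hermitian_differential scl ip dbar dadj"
  using assms
  unfolding dbar_hermitian_complex_def hermitian_differential_def hermitian_differential_axioms_def
    adjoint_pair_def adjoint_pair_axioms_def hermitian_space_def hermitian_space_axioms_def
    complex_vector_space_def
  by (elim conjE) (intro conjI; (assumption | blast))

lemma finite_cohomology_if_dbar_hermitian_complex:
  assumes herm: "dbar_hermitian_complex scl ip n Om dbar dadj"
    and cohom: "\<forall>k. cohom_fin_dim scl Om dbar k"
  shows "\<exists>B. finite B \<and> {v. dbar v = 0} \<subseteq> module.span scl (B \<union> range dbar)"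
proof -
  have vs: "vector_space scl"
    and Om: "\<forall>k. module.subspace scl (Om k)"
    and Om_top: "\<forall>k. n < k \<longrightarrow> Om k = {0}"
    and spanning: "UNIV = module.span scl (\<Union>k \<in> {..n}. Om k)"
    and direct: "\<forall>f. (\<forall>k. f k \<in> Om k) \<longrightarrow> (\<Sum>k\<le>n. f k) = 0 \<longrightarrow> (\<forall>k\<le>n. f k = 0)"
    and d: "Vector_Spaces.linear scl scl dbar"
    and d_Om: "\<forall>k. dbar ` Om k \<subseteq> Om (Suc k)"
    using herm unfolding dbar_hermitian_complex_def by - (elim conjE, assumption)+
  interpret complex_vector_space scl
    unfolding complex_vector_space_def by (rule vs)
  show ?thesis
  proof (rule finite_total_cohomology[OF d _ _ _ _ spanning])
    show "dbar ` Om k \<subseteq> Om (Suc k)" for k by (rule d_Om[rule_format])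
    show "subspace (Om k)" for k by (rule Om[rule_format])
    show "Om (Suc n) = {0}" by (rule Om_top[rule_format]) simp
    show "\<forall>k\<le>n. f k = 0" if "\<And>k. f k \<in> Om k" "(\<Sum>k\<le>n. f k) = 0" for f
      using direct that by blast
    show "cohom_fin_dim scl Om dbar k" for k by (rule cohom[rule_format])
  qed
qed

theorem corollary3p6:
  fixes scl :: "complex \<Rightarrow> 'v::ab_group_add \<Rightarrow> 'v"
    and ip :: "'v \<Rightarrow> 'v \<Rightarrow> complex"
    and n :: nat and Om :: "nat \<Rightarrow> 'v set"
    and dbar dadj :: "'v \<Rightarrow> 'v"
  assumes herm: "dbar_hermitian_complex scl ip n Om dbar dadj"
    and diag_lap: "diagonalisable_on scl UNIV (dbar_laplacian dbar dadj)"
    and diag_dd: "diagonalisable_on scl (range dbar) (dbar \<circ> dadj)"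
    and diag_ddag: "diagonalisable_on scl (range dadj) (dadj \<circ> dbar)"
    and cohom: "\<forall>k. cohom_fin_dim scl Om dbar k"
  shows "(spec_to_infinity scl UNIV (dbar_laplacian dbar dadj)
            \<longleftrightarrow> spec_to_infinity scl (range dbar) (dbar \<circ> dadj))
       \<and> (spec_to_infinity scl (range dbar) (dbar \<circ> dadj)
            \<longleftrightarrow> spec_to_infinity scl (range dadj) (dadj \<circ> dbar))"
proof -
  interpret hermitian_differential scl ip dbar dadj
    using herm by (rule hermitian_differential_if_dbar_hermitian_complex)
  obtain B where "finite B" "{v. dbar v = 0} \<subseteq> span (B \<union> range dbar)"
    using finite_cohomology_if_dbar_hermitian_complex[OF herm cohom] by blast
  then have harmonic: "fin_dim scl {h. dbar h = 0 \<and> dadj h = 0}"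
    by (rule fin_dim_harmonic[OF diag_lap])
  have swap: "spec_to_infinity scl (range dbar) (dbar \<circ> dadj)
      \<longleftrightarrow> spec_to_infinity scl (range dadj) (dadj \<circ> dbar)"
    using spec_to_infinity_swap adjoint_pair.spec_to_infinity_swap[OF adjoint_pair_swap] by blast
  then show ?thesis
    using spec_to_infinity_PQ_if_laplacian spec_to_infinity_laplacian[OF harmonic] by blast
qed

end
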